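(* Let $n\ge4$ and let $D_0\subsetneq D_1\subsetneq\dots\subsetneq D_m$ be a chain of sets of pairwise noncrossing diagonals of $P_n$. Then the points $\Phi(D_0),\dots,\Phi(D_m)$ are affinely independent, so their convex hull $\Phi(\Delta)$ is an $m$-simplex. In particular, for a maximal chain (a full flag of faces of $K_{n-1}$, with $m=n-3$), the image is an $(n-3)$-simplex.
   Context: $P_n$ is a regular $n$-gon whose edges are labeled cyclically by a fixed circular ordering; two diagonals cross if they meet in the interior; $\mathcal D$ is the set of diagonals. Faces of the associahedron $K_{n-1}$ correspond to sets of pairwise noncrossing diagonals (face of $D$ contains face of $D'$ iff $D\subseteq D'$), and a chain of such sets corresponds to a flag of faces and to a simplex $\Delta$ of the barycentric subdivision of $K_{n-1}$. For a triangulation $T$, $\Phi(T)\in\mathbb R^{\mathcal D}$ has $d$-coordinate $1/(n-3)$ if $d\in T$ and $0$ otherwise; for a set $D$ of pairwise noncrossing diagonals, $\Phi(D)$ is the average of $\Phi(T)$ over triangulations $T\supseteq D$; $\Phi(\Delta)$ is the convex hull of the $\Phi(D_i)$. *)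

theory Defs
  imports "HOL-Analysis.Analysis" "HOL-Library.Function_Algebras"
begin

text \<open>The real vector space structure on functions (pointwise), so that
  \<open>\<real>^\<D>\<close> can be modelled as the type of real-valued functions on diagonals.\<close>

instantiation "fun" :: (type, real_vector) real_vector
begin
definition scaleR_fun :: "real \<Rightarrow> ('a \<Rightarrow> 'b) \<Rightarrow> 'a \<Rightarrow> 'b"
  where "scaleR_fun r f = (\<lambda>x. r *\<^sub>R f x)"
instance
  by standard (auto simp: scaleR_fun_def fun_eq_iff scaleR_add_right scaleR_add_left)
end

text \<open>Vertices of the regular n-gon are labelled 0,...,n-1 in cyclic order.
  A diagonal is a pair (i,j) with i < j < n of non-adjacent vertices.\<close>

definition diagonals :: "nat \<Rightarrow> (nat \<times> nat) set" where
  "diagonals n = {(i, j). i < j \<and> j < n \<and> i + 1 < j \<and> \<not> (i = 0 \<and> j = n - 1)}"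

text \<open>Two diagonals cross iff they meet in the interior of the polygon, i.e. their
  endpoints strictly interleave.\<close>

definition crosses :: "nat \<times> nat \<Rightarrow> nat \<times> nat \<Rightarrow> bool" where
  "crosses d e = (case d of (i, j) \<Rightarrow> case e of (k, l) \<Rightarrow>
      (i < k \<and> k < j \<and> j < l) \<or> (k < i \<and> i < l \<and> l < j))"

definition noncrossing :: "nat \<Rightarrow> (nat \<times> nat) set \<Rightarrow> bool" where
  "noncrossing n D = (D \<subseteq> diagonals n \<and> (\<forall>d\<in>D. \<forall>e\<in>D. \<not> crosses d e))"

definition triangulation :: "nat \<Rightarrow> (nat \<times> nat) set \<Rightarrow> bool" where
  "triangulation n T = (noncrossing n T \<and>
      (\<forall>d\<in>diagonals n. noncrossing n (insert d T) \<longrightarrow> d \<in> T))"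

definition PhiT :: "nat \<Rightarrow> (nat \<times> nat) set \<Rightarrow> (nat \<times> nat) \<Rightarrow> real" where
  "PhiT n T = (\<lambda>d. if d \<in> T then 1 / (real n - 3) else 0)"

definition Phi :: "nat \<Rightarrow> (nat \<times> nat) set \<Rightarrow> (nat \<times> nat) \<Rightarrow> real" where
  "Phi n D = (let Ts = {T. triangulation n T \<and> D \<subseteq> T} in
      (1 / real (card Ts)) *\<^sub>R (\<Sum>T\<in>Ts. PhiT n T))"

end

theory Submission
  imports Defs
begin

text \<open>If \<open>d \<in> D\<close>, every triangulation containing \<open>D\<close> contains \<open>d\<close>, so the \<open>d\<close>-coordinate of
  \<open>\<Phi>(D)\<close> attains its maximal value \<open>1/(n-3)\<close>. If \<open>d \<notin> D\<close> but \<open>D \<union> {d}\<close> is noncrossing, some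
  diagonal crossing \<open>d\<close> is compatible with \<open>D\<close>, so some triangulation containing \<open>D\<close> misses \<open>d\<close>
  and the coordinate drops strictly below \<open>1/(n-3)\<close>. Picking \<open>d\<^sub>k \<in> D\<^sub>k\<^sub>+\<^sub>1 - D\<^sub>k\<close>, the
  coordinates \<open>\<Phi>(D\<^sub>j)(d\<^sub>k) - 1/(n-3)\<close> form a triangular matrix with nonzero diagonal, and
  this rules out any nontrivial affine relation among the \<open>\<Phi>(D\<^sub>j)\<close>.\<close>

lemma sum_fun_apply: "sum f A x = (\<Sum>a\<in>A. f a x)"
  by (induction A rule: infinite_finite_induct) (auto simp: plus_fun_def zero_fun_def)

lemma staircase_inj_on:
  fixes P :: "nat \<Rightarrow> 'a \<Rightarrow> real"
  assumes above: "\<And>k j. k < j \<Longrightarrow> j \<le> m \<Longrightarrow> P j (x k) = c"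
    and diagonal: "\<And>k. k < m \<Longrightarrow> P k (x k) \<noteq> c"
  shows "inj_on P {0..m}"
proof -
  have "P j \<noteq> P k" if "j < k" "k \<le> m" for j k
    using above[OF that] diagonal[of j] that by force
  then show ?thesis
    by (intro inj_onI) (metis atLeastAtMost_iff linorder_neqE_nat)
qed

lemma staircase_affine_relation_trivial:
  fixes P :: "nat \<Rightarrow> 'a \<Rightarrow> real"
  assumes above: "\<And>k j. k < j \<Longrightarrow> j \<le> m \<Longrightarrow> P j (x k) = c"
    and diagonal: "\<And>k. k < m \<Longrightarrow> P k (x k) \<noteq> c"
    and weights: "(\<Sum>j\<in>{0..m}. u j) = 0"
    and relation: "(\<Sum>j\<in>{0..m}. u j *\<^sub>R P j) = 0"
  shows "\<forall>j\<in>{0..m}. u j = 0"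
proof -
  have evaluated: "(\<Sum>j\<in>{0..m}. u j * (P j (x k) - c)) = 0" for k
  proof -
    have "(\<Sum>j\<in>{0..m}. u j * P j (x k)) = 0"
      using fun_cong[OF relation, of "x k"] by (simp add: sum_fun_apply scaleR_fun_def)
    then show ?thesis
      using weights by (simp add: right_diff_distrib sum_subtractf flip: sum_distrib_right)
  qed
  have below_top: "u k = 0" if "k < m" for k
    using that
  proof (induction k rule: less_induct)
    case (less k)
    have "u j * (P j (x k) - c) = 0" if "j \<in> {0..m} - {k}" for j
      using less.IH[of j] less.prems above[of k j] that by (cases "j < k") auto
    then have "(\<Sum>j\<in>{0..m} - {k}. u j * (P j (x k) - c)) = 0"
      by (rule sum.neutral[OF ballI])
    then have "u k * (P k (x k) - c) = 0"
      using evaluated[of k] less.prems by (simp add: sum.remove[of _ k])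
    then show "u k = 0"
      using diagonal[OF less.prems] by simp
  qed
  then have "(\<Sum>j\<in>{0..m} - {m}. u j) = 0"
    by (intro sum.neutral) auto
  then have "u m = 0"
    using weights by (simp add: sum.remove[of _ m])
  with below_top show ?thesis
    by (metis atLeastAtMost_iff le_neq_implies_less)
qed

lemma staircase_affine_independent:
  fixes P :: "nat \<Rightarrow> 'a \<Rightarrow> real"
  assumes above: "\<And>k j. k < j \<Longrightarrow> j \<le> m \<Longrightarrow> P j (x k) = c"
    and diagonal: "\<And>k. k < m \<Longrightarrow> P k (x k) \<noteq> c"
  shows "\<not> affine_dependent (P ` {0..m})"
proof
  have inj: "inj_on P {0..m}"
    using above diagonal by (rule staircase_inj_on)
  assume "affine_dependent (P ` {0..m})"
  then obtain U where U: "sum U (P ` {0..m}) = 0" "\<exists>v\<in>P ` {0..m}. U v \<noteq> 0"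
      "(\<Sum>v\<in>P ` {0..m}. U v *\<^sub>R v) = 0"
    by (auto simp: affine_dependent_explicit_finite)
  have "\<forall>j\<in>{0..m}. U (P j) = 0"
    using U(1,3) by (intro staircase_affine_relation_trivial[of m P x c] above diagonal)
      (simp_all add: sum.reindex[OF inj])
  with U(2) show False
    by blast
qed

lemma crosses_iff:
  "crosses (i, j) (k, l) \<longleftrightarrow> i < k \<and> k < j \<and> j < l \<or> k < i \<and> i < l \<and> l < j"
  by (simp add: crosses_def)

lemma crosses_sym: "crosses d e = crosses e d"
  by (cases d; cases e) (auto simp: crosses_def)

lemma not_crosses_self: "\<not> crosses d d"
  by (cases d) (auto simp: crosses_def)

lemma finite_diagonals: "finite (diagonals n)"
  by (rule finite_subset[of _ "{..<n} \<times> {..<n}"]) (auto simp: diagonals_def)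

lemma four_le_if_mem_diagonals: "d \<in> diagonals n \<Longrightarrow> 4 \<le> n"
  by (auto simp: diagonals_def)

lemma noncrossing_subset: "noncrossing n D \<Longrightarrow> E \<subseteq> D \<Longrightarrow> noncrossing n E"
  unfolding noncrossing_def by blast

lemma noncrossing_insert:
  "noncrossing n (insert e D) \<longleftrightarrow> e \<in> diagonals n \<and> noncrossing n D \<and> (\<forall>f\<in>D. \<not> crosses e f)"
  unfolding noncrossing_def using not_crosses_self crosses_sym by blast

lemma finite_triangulations_containing: "finite {T. triangulation n T \<and> D \<subseteq> T}"
  by (rule finite_subset[of _ "Pow (diagonals n)"])
    (auto simp: triangulation_def noncrossing_def finite_diagonals)

lemma ex_triangulation_containing:
  assumes "noncrossing n D"
  shows "\<exists>T. triangulation n T \<and> D \<subseteq> T"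
proof -
  have "finite {T. noncrossing n T}"
    by (rule finite_subset[of _ "Pow (diagonals n)"]) (auto simp: noncrossing_def finite_diagonals)
  then obtain T where T: "noncrossing n T" "D \<subseteq> T"
    and maximal: "\<And>T'. noncrossing n T' \<Longrightarrow> T \<subseteq> T' \<Longrightarrow> T = T'"
    using finite_has_maximal2[of "{T. noncrossing n T}" D] assms by auto
  have "triangulation n T"
    unfolding triangulation_def using T(1) maximal by (metis subset_insertI insertI1)
  with T(2) show ?thesis
    by blast
qed

lemma not_crosses_flip_below:
  assumes order: "b < i" "i < a" "a < j"
    and d: "(p, q) \<noteq> (i, j)" "\<not> crosses (i, j) (p, q)"
    and ia: "a = i + 1 \<or> \<not> crosses (i, a) (p, q)"
    and bj: "b = 0 \<and> q \<le> j \<or> \<not> crosses (b, j) (p, q)"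
    and a_max: "p = i \<Longrightarrow> q < j \<Longrightarrow> q \<le> a"
    and b_max: "q = j \<Longrightarrow> p < i \<Longrightarrow> p \<le> b"
  shows "\<not> crosses (b, a) (p, q)"
proof
  assume "crosses (b, a) (p, q)"
  then consider (up) "b < p" "p < a" "a < q" | (down) "p < b" "b < q" "q < a"
    by (auto simp: crosses_iff)
  then show False
  proof cases
    case up
    consider "p < i" | "p = i" | "i < p"
      by linarith
    then show False
    proof cases
      case 1
      consider "q < j" | "q = j" | "j < q"
        by linarith
      then show False
        using d(2) bj b_max \<open>p < i\<close> up order by cases (auto simp: crosses_iff)
    next
      case 2
      consider "q < j" | "q = j" | "j < q"
        by linarith
      then show False
        using d bj a_max \<open>p = i\<close> up order by cases (auto simp: crosses_iff)
    next
      case 3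
      then show False
        using ia up by (auto simp: crosses_iff)
    qed
  next
    case down
    consider "i < q" | "q \<le> i"
      by linarith
    then show False
      using d(2) bj down order by cases (auto simp: crosses_iff)
  qed
qed

lemma not_crosses_flip_above:
  assumes order: "i < a" "a < j" "j < b"
    and d: "(p, q) \<noteq> (i, j)" "\<not> crosses (i, j) (p, q)"
    and ia: "a = i + 1 \<or> \<not> crosses (i, a) (p, q)"
    and jb: "b = j + 1 \<or> \<not> crosses (j, b) (p, q)"
    and a_max: "p = i \<Longrightarrow> q < j \<Longrightarrow> q \<le> a"
    and no_jp: "q = j \<Longrightarrow> p < i \<Longrightarrow> False"
    and b_max: "p = j \<Longrightarrow> q \<le> b"
  shows "\<not> crosses (a, b) (p, q)"
proof
  assume "crosses (a, b) (p, q)"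
  then consider (up) "a < p" "p < b" "b < q" | (down) "p < a" "a < q" "q < b"
    by (auto simp: crosses_iff)
  then show False
  proof cases
    case up
    consider "p < j" | "p = j" | "j < p"
      by linarith
    then show False
      using d(2) jb b_max up order by cases (auto simp: crosses_iff)
  next
    case down
    consider "p < i" | "p = i" | "i < p"
      by linarith
    then show False
    proof cases
      case 1
      consider "q < j" | "q = j" | "j < q"
        by linarith
      then show False
        using d(2) jb no_jp \<open>p < i\<close> down order by cases (auto simp: crosses_iff)
    next
      case 2
      consider "q < j" | "q = j" | "j < q"
        by linarith
      then show False
        using d jb a_max \<open>p = i\<close> down order by cases (auto simp: crosses_iff)
    next
      case 3
      then show False
        using ia down by (auto simp: crosses_iff)
    qed
  qed
qed

text \<open>For \<open>d = (i, j)\<close>, let \<open>a\<close> be the neighbour of \<open>i\<close> strictly between \<open>i\<close> and \<open>j\<close> that is closest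
  to \<open>j\<close>, and \<open>b\<close> the neighbour of \<open>j\<close> outside that range that comes cyclically closest to
  \<open>i\<close>, where neighbours are joined by a diagonal of \<open>D\<close> or a side of the polygon. The diagonal
  joining \<open>a\<close> and \<open>b\<close> crosses \<open>d\<close>; a diagonal of \<open>D\<close> crossing it would cross \<open>d\<close>, the
  side \<open>(i, a)\<close> or the side \<open>(j, b)\<close> of the cell of \<open>D\<close> containing it, or contradict the choice
  of \<open>a\<close> or \<open>b\<close>.\<close>

context
  fixes n :: nat and D :: "(nat \<times> nat) set" and i j a :: nat
  assumes compatible: "noncrossing n (insert (i, j) D)" and new: "(i, j) \<notin> D"
    and a: "i < a" "a < j" "a = i + 1 \<or> (i, a) \<in> D"
    and a_max: "\<And>q. (i, q) \<in> D \<Longrightarrow> i < q \<Longrightarrow> q < j \<Longrightarrow> q \<le> a"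
begin

private lemma diagonal_ij: "i + 1 < j" "j < n" "\<not> (i = 0 \<and> j = n - 1)"
  using compatible by (auto simp: noncrossing_insert diagonals_def)

private lemma mem_D_ordered: "(p, q) \<in> D \<Longrightarrow> p < q \<and> q < n"
  using compatible by (auto simp: noncrossing_def diagonals_def)

private lemma mem_D_not_crosses: "f \<in> D \<Longrightarrow> g \<in> D \<Longrightarrow> \<not> crosses f g"
  using compatible by (auto simp: noncrossing_def)

private lemma mem_D_not_d: "(p, q) \<in> D \<Longrightarrow> (p, q) \<noteq> (i, j)" "(p, q) \<in> D \<Longrightarrow> \<not> crosses (i, j) (p, q)"
  using new compatible by (auto simp: noncrossing_insert)

private lemma mem_D_not_crosses_ia: "(p, q) \<in> D \<Longrightarrow> a = i + 1 \<or> \<not> crosses (i, a) (p, q)"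
  using a(3) mem_D_not_crosses by blast

private lemma noncrossing_insert_flip:
  assumes "e \<in> diagonals n" and "\<And>p q. (p, q) \<in> D \<Longrightarrow> \<not> crosses e (p, q)"
  shows "noncrossing n (insert e D)"
  using assms compatible by (auto simp: noncrossing_insert)

lemma ex_crossing_compatible_diagonal_below:
  assumes "\<exists>k<i. (k, j) \<in> D \<or> k = 0 \<and> j = n - 1"
  shows "\<exists>e. crosses (i, j) e \<and> noncrossing n (insert e D)"
proof -
  have "\<exists>b. (b < i \<and> ((b, j) \<in> D \<or> b = 0 \<and> j = n - 1))
      \<and> (\<forall>p. p < i \<and> ((p, j) \<in> D \<or> p = 0 \<and> j = n - 1) \<longrightarrow> p \<le> b)"
    using assms by (elim exE conjE) (rule Nat.ex_has_greatest_nat[of _ _ i], auto)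
  then obtain b where b: "b < i" "(b, j) \<in> D \<or> b = 0 \<and> j = n - 1"
    and b_max: "\<And>p. (p, j) \<in> D \<Longrightarrow> p < i \<Longrightarrow> p \<le> b"
    by blast
  have "\<not> crosses (b, a) (p, q)" if pq: "(p, q) \<in> D" for p q
  proof (rule not_crosses_flip_below[OF b(1) a(1,2) mem_D_not_d[OF pq] mem_D_not_crosses_ia[OF pq]])
    show "b = 0 \<and> q \<le> j \<or> \<not> crosses (b, j) (p, q)"
      using b(2) mem_D_not_crosses pq mem_D_ordered[OF pq] by auto
    show "p = i \<Longrightarrow> q < j \<Longrightarrow> q \<le> a" "q = j \<Longrightarrow> p < i \<Longrightarrow> p \<le> b"
      using a_max b_max pq mem_D_ordered[OF pq] by blast+
  qed
  moreover have "(b, a) \<in> diagonals n" "crosses (i, j) (b, a)"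
    using a b diagonal_ij by (auto simp: diagonals_def crosses_iff)
  ultimately show ?thesis
    using noncrossing_insert_flip by blast
qed

lemma ex_crossing_compatible_diagonal_above:
  assumes "\<not> (\<exists>k<i. (k, j) \<in> D \<or> k = 0 \<and> j = n - 1)"
  shows "\<exists>e. crosses (i, j) e \<and> noncrossing n (insert e D)"
proof -
  have "j + 1 < n"
    using assms diagonal_ij by (cases "j = n - 1") auto
  then have "\<exists>b. (j < b \<and> b < n \<and> (b = j + 1 \<or> (j, b) \<in> D))
      \<and> (\<forall>q. j < q \<and> q < n \<and> (q = j + 1 \<or> (j, q) \<in> D) \<longrightarrow> q \<le> b)"
    by (intro Nat.ex_has_greatest_nat[of _ "j + 1" n]) auto
  then obtain b where b: "j < b" "b < n" "b = j + 1 \<or> (j, b) \<in> D"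
    and b_max: "\<And>q. (j, q) \<in> D \<Longrightarrow> j < q \<Longrightarrow> q < n \<Longrightarrow> q \<le> b"
    by blast
  have "\<not> crosses (a, b) (p, q)" if pq: "(p, q) \<in> D" for p q
  proof (rule not_crosses_flip_above[OF a(1,2) b(1) mem_D_not_d[OF pq] mem_D_not_crosses_ia[OF pq]])
    show "b = j + 1 \<or> \<not> crosses (j, b) (p, q)"
      using b(3) mem_D_not_crosses pq by blast
    show "p = i \<Longrightarrow> q < j \<Longrightarrow> q \<le> a" "q = j \<Longrightarrow> p < i \<Longrightarrow> False" "p = j \<Longrightarrow> q \<le> b"
      using a_max assms b_max pq mem_D_ordered[OF pq] by blast+
  qed
  moreover have "(a, b) \<in> diagonals n" "crosses (i, j) (a, b)"
    using a b diagonal_ij by (auto simp: diagonals_def crosses_iff)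
  ultimately show ?thesis
    using noncrossing_insert_flip by blast
qed

end

lemma ex_crossing_compatible_diagonal:
  assumes "noncrossing n (insert d D)" and "d \<notin> D"
  shows "\<exists>e. crosses d e \<and> noncrossing n (insert e D)"
proof -
  obtain i j where d: "d = (i, j)"
    by (cases d)
  have "i + 1 < j"
    using assms(1) by (simp add: noncrossing_insert d diagonals_def)
  then have "\<exists>a. (i < a \<and> a < j \<and> (a = i + 1 \<or> (i, a) \<in> D))
      \<and> (\<forall>q. i < q \<and> q < j \<and> (q = i + 1 \<or> (i, q) \<in> D) \<longrightarrow> q \<le> a)"
    by (intro Nat.ex_has_greatest_nat[of _ "i + 1" j]) auto
  then obtain a where a: "i < a" "a < j" "a = i + 1 \<or> (i, a) \<in> D"
    and a_max: "\<And>q. (i, q) \<in> D \<Longrightarrow> i < q \<Longrightarrow> q < j \<Longrightarrow> q \<le> a"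
    by blast
  show ?thesis
    using ex_crossing_compatible_diagonal_below[OF assms[unfolded d] a a_max]
      ex_crossing_compatible_diagonal_above[OF assms[unfolded d] a a_max]
    unfolding d by blast
qed

lemma Phi_apply:
  "Phi n D d = (\<Sum>T\<in>{T. triangulation n T \<and> D \<subseteq> T}. PhiT n T d)
                / real (card {T. triangulation n T \<and> D \<subseteq> T})"
  by (simp add: Phi_def Let_def scaleR_fun_def sum_fun_apply)

lemma Phi_eq_if_mem:
  assumes "noncrossing n D" and "d \<in> D"
  shows "Phi n D d = 1 / (real n - 3)"
proof -
  let ?Ts = "{T. triangulation n T \<and> D \<subseteq> T}"
  have "?Ts \<noteq> {}"
    using ex_triangulation_containing[OF assms(1)] by blast
  then have "card ?Ts > 0"
    using finite_triangulations_containing by (simp add: card_gt_0_iff)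
  moreover have "PhiT n T d = 1 / (real n - 3)" if "T \<in> ?Ts" for T
    using that assms(2) by (auto simp: PhiT_def)
  ultimately show ?thesis
    by (simp add: Phi_apply)
qed

lemma Phi_less_if_compatible:
  assumes "noncrossing n (insert d D)" and "d \<notin> D"
  shows "Phi n D d < 1 / (real n - 3)"
proof -
  let ?Ts = "{T. triangulation n T \<and> D \<subseteq> T}" and ?c = "1 / (real n - 3)"
  have "4 \<le> n"
    using assms(1) four_le_if_mem_diagonals[of d n] by (simp add: noncrossing_insert)
  then have "0 < ?c"
    by simp
  obtain e where "crosses d e" "noncrossing n (insert e D)"
    using ex_crossing_compatible_diagonal[OF assms] by blast
  then obtain T where T: "triangulation n T" "insert e D \<subseteq> T"
    using ex_triangulation_containing by blast
  with \<open>crosses d e\<close> have "d \<notin> T"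
    by (auto simp: triangulation_def noncrossing_def)
  have "T \<in> ?Ts"
    using T by simp
  then have "card ?Ts > 0"
    using finite_triangulations_containing by (auto simp: card_gt_0_iff)
  have "(\<Sum>T\<in>?Ts. PhiT n T d) < (\<Sum>T\<in>?Ts. ?c)"
    by (rule sum_strict_mono_ex1[OF finite_triangulations_containing])
      (use \<open>T \<in> ?Ts\<close> \<open>d \<notin> T\<close> \<open>0 < ?c\<close> in \<open>auto simp: PhiT_def\<close>)
  with \<open>card ?Ts > 0\<close> show ?thesis
    by (simp add: Phi_apply field_simps)
qed

theorem lemma16:
  fixes n m :: nat and D :: "nat \<Rightarrow> (nat \<times> nat) set"
  assumes "n \<ge> 4"
    and "\<And>i. i \<le> m \<Longrightarrow> noncrossing n (D i)"
    and "\<And>i. i < m \<Longrightarrow> D i \<subset> D (Suc i)"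
  shows "inj_on (\<lambda>i. Phi n (D i)) {0..m}
       \<and> \<not> affine_dependent ((\<lambda>i. Phi n (D i)) ` {0..m})"
proof -
  have chain: "D j \<subseteq> D k" if "j \<le> k" "k \<le> m" for j k
  proof (rule lift_Suc_mono_le_ivl[of "{..<m}"])
    show "D i \<le> D (Suc i)" if "i \<in> {..<m}" for i
      using assms(3) that by blast
  qed (use that in auto)
  have "\<exists>y. y \<in> D (Suc k) - D k" if "k < m" for k
    using assms(3)[OF that] by blast
  then obtain x where x: "\<And>k. k < m \<Longrightarrow> x k \<in> D (Suc k) - D k"
    by metis
  have above: "Phi n (D j) (x k) = 1 / (real n - 3)" if "k < j" "j \<le> m" for k j
    using Phi_eq_if_mem[OF assms(2)[OF that(2)]] x[of k] chain[of "Suc k" j] that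
    by (meson DiffD1 Suc_leI less_le_trans subsetD)
  have diagonal: "Phi n (D k) (x k) \<noteq> 1 / (real n - 3)" if "k < m" for k
  proof -
    have "noncrossing n (insert (x k) (D k))"
      using noncrossing_subset[OF assms(2)[of "Suc k"]] x[OF that] chain[of k "Suc k"] that by auto
    with x[OF that] show ?thesis
      using Phi_less_if_compatible by fastforce
  qed
  show ?thesis
    using staircase_inj_on[of m "\<lambda>j. Phi n (D j)" x, OF above diagonal]
      staircase_affine_independent[of m "\<lambda>j. Phi n (D j)" x, OF above diagonal] by simp
qed

end
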